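(* Let $G'$ be a finite directed acyclic graph with distinct vertices $s'_1,\dots,s'_n$ (sources, with no incoming edges) and $t'_1,t'_2$ (terminals, with no outgoing edges) such that for every $i\in\{1,\dots,n\}$ and $j\in\{1,2\}$ there is a directed path from $s'_i$ to $t'_j$. Then there exists a subgraph $G^*$ of $G'$ such that (i) for every $i$ and $j$ there is exactly one directed path from $s'_i$ to $t'_j$ in $G^*$, and (ii) $G^*$ is minimal: for every edge $e$ of $G^*$, removing $e$ from $G^*$ leaves some pair $s'_i,t'_j$ with no directed path from $s'_i$ to $t'_j$.
   Context: "Exactly one directed path" means there is a directed path from $s'_i$ to $t'_j$ and no other, distinct, directed path between them (paths are sequences of edges). *)

theory Defs
  imports "Graph_Theory.Graph_Theory"
begin

end

theory Submission
  imports Defs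
begin

(*
  Let G be a finite acyclic digraph with two terminals t 1, t 2 (no outgoing arcs)
  and a set S of vertices from which both terminals are reachable.  We select, for
  every vertex v, at most one outgoing arc per terminal, as follows.  Write
  targets v for the set of terminals reachable from v.  If some arc out of v leads
  to a vertex with the same (nonempty) target set, we keep one such arc; otherwise
  we keep, for each j, one arc leading to a vertex whose target set is exactly {j}.
  Among the selected arcs, every vertex has at most one arc towards each terminal it
  reaches, so walks to a terminal using selected arcs are unique; and by induction on
  the size of the reachable set, every vertex reaching t j has such a walk.
  Restricting further to the selected arcs reachable from S gives the subgraph H:
  it contains exactly one path from each s in S to each terminal, and every arc of H
  lies on one of these paths, so deleting it destroys that path.

  The construction does not need the remaining hypotheses of lemma2 (that the s i
  are distinct sources, distinct from the terminals).
*)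

section \<open>Walks along a restricted set of arcs\<close>

definition restrict_arcs :: "('a,'b) pre_digraph \<Rightarrow> 'b set \<Rightarrow> ('a,'b) pre_digraph" where
  "restrict_arcs G A = \<lparr>verts = verts G, arcs = A, tail = tail G, head = head G\<rparr>"

definition arc_walk :: "('a,'b) pre_digraph \<Rightarrow> 'b set \<Rightarrow> 'a \<Rightarrow> 'b list \<Rightarrow> 'a \<Rightarrow> bool" where
  "arc_walk G A u p v \<longleftrightarrow> u \<in> verts G \<and> set p \<subseteq> A \<and> pre_digraph.cas G u p v"

lemma awalk_restrict_arcs:
  "pre_digraph.awalk (restrict_arcs G A) u p v \<longleftrightarrow> arc_walk G A u p v"
proof -
  have "pre_digraph.cas (restrict_arcs G A) u p v = pre_digraph.cas G u p v" for u
    by (induction p arbitrary: u) (auto simp: restrict_arcs_def pre_digraph.cas.simps)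
  then show ?thesis
    by (simp add: pre_digraph.awalk_def arc_walk_def) (simp add: restrict_arcs_def)
qed

lemma awalk_iff_arc_walk: "pre_digraph.awalk G u p v \<longleftrightarrow> arc_walk G (arcs G) u p v"
  by (simp add: pre_digraph.awalk_def arc_walk_def)

lemma del_arc_restrict_arcs:
  "pre_digraph.del_arc (restrict_arcs G A) e = restrict_arcs G (A - {e})"
  by (simp add: pre_digraph.del_arc_def restrict_arcs_def)

lemma arc_walk_Nil [simp]: "arc_walk G A u [] v \<longleftrightarrow> u = v \<and> u \<in> verts G"
  by (auto simp: arc_walk_def pre_digraph.cas.simps)

lemma arc_walk_mono: "arc_walk G A u p v \<Longrightarrow> A \<subseteq> B \<Longrightarrow> arc_walk G B u p v"
  by (auto simp: arc_walk_def)

lemma no_apath_del_arc: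
  assumes walk: "arc_walk G A u p v" and e: "e \<in> set p"
    and unique: "\<And>q. arc_walk G A u q v \<Longrightarrow> q = p"
  shows "\<not> (\<exists>q. pre_digraph.apath (pre_digraph.del_arc (restrict_arcs G A) e) u q v)"
proof
  assume "\<exists>q. pre_digraph.apath (pre_digraph.del_arc (restrict_arcs G A) e) u q v"
  then obtain q where q: "arc_walk G (A - {e}) u q v"
    by (auto simp: pre_digraph.apath_def del_arc_restrict_arcs awalk_restrict_arcs)
  have "q = p" using unique[OF arc_walk_mono[OF q Diff_subset]] .
  then show False using q e by (auto simp: arc_walk_def)
qed

context wf_digraph
begin

lemma arc_walk_Cons:
  "A \<subseteq> arcs G \<Longrightarrow>
     arc_walk G A u (a # p) v \<longleftrightarrow> a \<in> A \<and> tail G a = u \<and> arc_walk G A (head G a) p v"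
  by (auto simp: arc_walk_def pre_digraph.cas.simps)

lemma arc_walk_append:
  "A \<subseteq> arcs G \<Longrightarrow> arc_walk G A u p w \<Longrightarrow> arc_walk G A w q v \<Longrightarrow> arc_walk G A u (p @ q) v"
  by (induction p arbitrary: u) (auto simp: arc_walk_Cons)

lemma arc_walk_last_in_verts: "A \<subseteq> arcs G \<Longrightarrow> arc_walk G A u p v \<Longrightarrow> v \<in> verts G"
  by (induction p arbitrary: u) (auto simp: arc_walk_Cons)

lemma reachable_iff_arc_walk: "u \<rightarrow>\<^sup>* v \<longleftrightarrow> (\<exists>p. arc_walk G (arcs G) u p v)"
  by (simp add: reachable_awalk awalk_iff_arc_walk)

lemma subgraph_restrict_arcs:
  assumes "A \<subseteq> arcs G" shows "subgraph (restrict_arcs G A) G"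
proof -
  have "wf_digraph (restrict_arcs G A)"
    by unfold_locales (use assms in \<open>auto simp: restrict_arcs_def\<close>)
  then show ?thesis
    using assms wf_digraph_axioms by (auto simp: subgraph_def compatible_def restrict_arcs_def)
qed

lemma ex1_apath_restrict_arcs:
  assumes A: "A \<subseteq> arcs G" and walk: "arc_walk G A u p v"
    and unique: "\<And>q. arc_walk G A u q v \<Longrightarrow> q = p"
  shows "\<exists>!q. pre_digraph.apath (restrict_arcs G A) u q v"
proof -
  let ?H = "restrict_arcs G A"
  have wfH: "wf_digraph ?H" using subgraph_restrict_arcs[OF A] by (simp add: subgraph_def)
  have path: "pre_digraph.apath ?H u (wf_digraph.awalk_to_apath ?H p) v"
    using walk by (intro wf_digraph.apath_awalk_to_apath[OF wfH]) (simp add: awalk_restrict_arcs)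
  have "q = p" if "pre_digraph.apath ?H u q v" for q
    using that unique by (simp add: pre_digraph.apath_def awalk_restrict_arcs)
  with path show ?thesis by (metis ex1I)
qed

end

section \<open>Selecting arcs towards two terminals\<close>

lemma proper_subset_of_pair:
  assumes "A \<subset> B" "B \<subseteq> {x, y}" "j \<in> A" shows "A = {j}"
proof -
  obtain k where k: "k \<in> B" "k \<notin> A" using assms(1) by blast
  then have "k \<in> {x, y}" "j \<in> {x, y}" "A \<subseteq> {x, y} - {k}" using assms by auto
  then show ?thesis using assms(3) k(2) by (cases "k = x") auto
qed

locale two_terminal_dag = fin_digraph G for G :: "('a,'b) pre_digraph" +
  fixes t :: "nat \<Rightarrow> 'a"
  assumes acyclic: "\<And>p. \<not> pre_digraph.cycle G p"
    and terminal: "\<And>j. j \<in> {1,2} \<Longrightarrow> out_arcs G (t j) = {}"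
begin

definition targets :: "'a \<Rightarrow> nat set" where
  "targets v = {j \<in> {1,2}. v \<rightarrow>\<^sup>*\<^bsub>G\<^esub> t j}"

definition keeps :: "'a \<Rightarrow> 'b \<Rightarrow> bool" where
  "keeps v a \<longleftrightarrow> a \<in> arcs G \<and> tail G a = v \<and> targets (head G a) = targets v \<and> targets v \<noteq> {}"

definition splits_to :: "'a \<Rightarrow> nat \<Rightarrow> 'b \<Rightarrow> bool" where
  "splits_to v j a \<longleftrightarrow> a \<in> arcs G \<and> tail G a = v \<and> targets (head G a) = {j}"

definition keep_arc :: "'a \<Rightarrow> 'b" where
  "keep_arc v = (SOME a. keeps v a)"

definition split_arc :: "'a \<Rightarrow> nat \<Rightarrow> 'b" where
  "split_arc v j = (SOME a. splits_to v j a)"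

lemma keep_arc: "keeps v a \<Longrightarrow> keeps v (keep_arc v)"
  unfolding keep_arc_def by (rule someI)

lemma split_arc: "splits_to v j a \<Longrightarrow> splits_to v j (split_arc v j)"
  unfolding split_arc_def by (rule someI)

definition selected :: "'b set" where
  "selected = {keep_arc v | v. \<exists>a. keeps v a}
     \<union> {split_arc v j | v j. (\<nexists>a. keeps v a) \<and> (\<exists>a. splits_to v j a)}"

lemma selected_cases:
  assumes "a \<in> selected"
  obtains (keep) "keeps (tail G a) a" "a = keep_arc (tail G a)"
  | (split) j where "\<nexists>b. keeps (tail G a) b" "splits_to (tail G a) j a"
      "a = split_arc (tail G a) j"
proof -
  from assms consider (k) v b where "keeps v b" "a = keep_arc v"
    | (s) v j b where "\<nexists>b. keeps v b" "splits_to v j b" "a = split_arc v j"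
    unfolding selected_def by blast
  then show thesis
  proof cases
    case k
    then have "keeps v a" using keep_arc by simp
    moreover from this have "tail G a = v" by (simp add: keeps_def)
    ultimately show thesis using keep k(2) by simp
  next
    case s
    then have "splits_to v j a" using split_arc by simp
    moreover from this have "tail G a = v" by (simp add: splits_to_def)
    ultimately show thesis using split s by simp
  qed
qed

lemma selected_arcs: "selected \<subseteq> arcs G"
proof
  fix a assume "a \<in> selected"
  then show "a \<in> arcs G" by (cases rule: selected_cases) (auto simp: keeps_def splits_to_def)
qed

lemma selected_productive:
  assumes "a \<in> selected" shows "targets (head G a) \<noteq> {}"
  using assms by (cases rule: selected_cases) (auto simp: keeps_def splits_to_def)

lemma selected_unique:
  assumes "a \<in> selected" "b \<in> selected" "tail G a = tail G b"
    and "j \<in> targets (head G a)" "j \<in> targets (head G b)"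
  shows "a = b"
  using assms(1)
proof (cases rule: selected_cases)
  case keep
  with assms(2,3) show ?thesis by (cases rule: selected_cases) auto
next
  case (split k)
  from assms(2) show ?thesis
  proof (cases rule: selected_cases)
    case (split k')
    then have "k = k'" using \<open>splits_to (tail G a) k a\<close> assms(3-5) by (simp add: splits_to_def)
    then show ?thesis using split \<open>a = split_arc (tail G a) k\<close> assms(3) by simp
  qed (use split assms(3) in auto)
qed

lemma targets_arc_mono:
  assumes a: "a \<in> arcs G" shows "targets (head G a) \<subseteq> targets (tail G a)"
proof
  fix j assume "j \<in> targets (head G a)"
  then have j: "j \<in> {1,2}" and reach: "head G a \<rightarrow>\<^sup>*\<^bsub>G\<^esub> t j" by (simp_all add: targets_def)
  have "tail G a \<rightarrow>\<^sup>*\<^bsub>G\<^esub> t j"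
    using adj_reachable_trans[OF in_arcs_imp_in_arcs_ends[OF a] reach] .
  with j show "j \<in> targets (tail G a)" by (simp add: targets_def)
qed

text \<open>If some arc out of v leads towards t j, so does a selected one.  This is where
  having only two terminals matters: an arc that does not keep all targets of v
  reaches exactly one terminal.\<close>

lemma selected_arc_towards:
  assumes a: "a \<in> arcs G" "tail G a = v" and j: "j \<in> targets (head G a)"
  obtains b where "b \<in> selected" "tail G b = v" "j \<in> targets (head G b)"
proof (cases "\<exists>b. keeps v b")
  case True
  then have "keeps v (keep_arc v)" "keep_arc v \<in> selected"
    using keep_arc by (auto simp: selected_def)
  moreover have "j \<in> targets v" using targets_arc_mono a j by blast
  ultimately show thesis using that[of "keep_arc v"] by (simp add: keeps_def)
next
  case False
  have "targets (head G a) \<subset> targets v"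
    using targets_arc_mono False a j by (auto simp: keeps_def)
  moreover have "targets v \<subseteq> {1,2}" by (auto simp: targets_def)
  ultimately have "targets (head G a) = {j}" using j by (rule proper_subset_of_pair)
  then have "splits_to v j a" using a by (simp add: splits_to_def)
  then have "splits_to v j (split_arc v j)" by (rule split_arc)
  moreover have "split_arc v j \<in> selected"
    unfolding selected_def using False \<open>splits_to v j a\<close> by blast
  ultimately
  show thesis using that[of "split_arc v j"] by (simp add: splits_to_def)
qed

text \<open>By acyclicity, following an arc strictly shrinks the set of reachable vertices;
  this is the measure for the induction below.\<close>

lemma reachable_set_shrinks:
  assumes a: "a \<in> arcs G"
  shows "card {w. head G a \<rightarrow>\<^sup>*\<^bsub>G\<^esub> w} < card {w. tail G a \<rightarrow>\<^sup>*\<^bsub>G\<^esub> w}"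
proof (rule psubset_card_mono)
  show "finite {w. tail G a \<rightarrow>\<^sup>*\<^bsub>G\<^esub> w}"
    using reachable_in_verts(2) by (auto intro: finite_subset[OF _ finite_verts])
  have step: "tail G a \<rightarrow>\<^bsub>G\<^esub> head G a" using in_arcs_imp_in_arcs_ends[OF a] .
  have "\<not> head G a \<rightarrow>\<^sup>*\<^bsub>G\<^esub> tail G a"
  proof
    assume "head G a \<rightarrow>\<^sup>*\<^bsub>G\<^esub> tail G a"
    then obtain p where "awalk (head G a) p (tail G a)" by (auto simp: reachable_awalk)
    then have "closed_w (a # p)" using a by (auto simp: closed_w_def awalk_Cons_iff)
    then show False using closed_w_imp_cycle acyclic by blast
  qed
  moreover have "tail G a \<rightarrow>\<^sup>*\<^bsub>G\<^esub> tail G a" using a by simp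
  moreover have "{w. head G a \<rightarrow>\<^sup>*\<^bsub>G\<^esub> w} \<subseteq> {w. tail G a \<rightarrow>\<^sup>*\<^bsub>G\<^esub> w}"
    using adj_reachable_trans[OF step] by blast
  ultimately show "{w. head G a \<rightarrow>\<^sup>*\<^bsub>G\<^esub> w} \<subset> {w. tail G a \<rightarrow>\<^sup>*\<^bsub>G\<^esub> w}"
    by blast
qed

lemma selected_walk_exists:
  "j \<in> targets v \<Longrightarrow> \<exists>p. arc_walk G selected v p (t j)"
proof (induction "card {w. v \<rightarrow>\<^sup>*\<^bsub>G\<^esub> w}" arbitrary: v rule: less_induct)
  case less
  show ?case
  proof (cases "v = t j")
    case True
    then have "arc_walk G selected v [] (t j)"
      using less.prems reachable_in_verts(1) by (auto simp: targets_def)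
    then show ?thesis ..
  next
    case False
    from less.prems have j: "j \<in> {1,2}" and reach: "v \<rightarrow>\<^sup>*\<^bsub>G\<^esub> t j"
      by (simp_all add: targets_def)
    from reach obtain w where "v \<rightarrow>\<^bsub>G\<^esub> w" "w \<rightarrow>\<^sup>*\<^bsub>G\<^esub> t j"
      using False by (cases rule: converse_reachable_cases) auto
    then obtain a where "a \<in> arcs G" "tail G a = v" "j \<in> targets (head G a)"
      using j by (auto simp: arcs_ends_conv targets_def)
    then obtain b where b: "b \<in> selected" "tail G b = v" "j \<in> targets (head G b)"
      by (rule selected_arc_towards)
    have "card {w. head G b \<rightarrow>\<^sup>*\<^bsub>G\<^esub> w} < card {w. v \<rightarrow>\<^sup>*\<^bsub>G\<^esub> w}"
      using reachable_set_shrinks b(1,2) selected_arcs by blast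
    with less.hyps b(3) obtain q where "arc_walk G selected (head G b) q (t j)" by blast
    then have "arc_walk G selected v (b # q) (t j)"
      using b selected_arcs by (simp add: arc_walk_Cons)
    then show ?thesis ..
  qed
qed

text \<open>Walks along selected arcs to a terminal are unique: a terminal has no outgoing
  arcs, and elsewhere the first arc is forced by selected_unique.\<close>

lemma selected_walk_unique:
  "j \<in> {1,2} \<Longrightarrow> arc_walk G selected v p (t j) \<Longrightarrow> arc_walk G selected v q (t j) \<Longrightarrow> p = q"
proof (induction p arbitrary: v q)
  case Nil
  then show ?case using terminal selected_arcs
    by (cases q) (auto simp: arc_walk_Cons out_arcs_def)
next
  case (Cons a p)
  have towards: "j \<in> targets u" if "arc_walk G selected u r (t j)" for u r
  proof -
    have "arc_walk G (arcs G) u r (t j)" using arc_walk_mono[OF that selected_arcs] .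
    then show ?thesis using \<open>j \<in> {1,2}\<close> by (auto simp: targets_def reachable_iff_arc_walk)
  qed
  show ?case
  proof (cases q)
    case Nil
    then show ?thesis using Cons.prems terminal selected_arcs
      by (auto simp: arc_walk_Cons out_arcs_def)
  next
    case (Cons b q')
    have a: "a \<in> selected" "tail G a = v" "arc_walk G selected (head G a) p (t j)"
      using Cons.prems(2) selected_arcs by (auto simp: arc_walk_Cons)
    have b: "b \<in> selected" "tail G b = v" "arc_walk G selected (head G b) q' (t j)"
      using Cons.prems(3) \<open>q = b # q'\<close> selected_arcs by (auto simp: arc_walk_Cons)
    have "a = b" using selected_unique[OF a(1) b(1)] a b towards by auto
    then show ?thesis using Cons.IH[OF Cons.prems(1) a(3)] b(3) \<open>q = b # q'\<close> by simp
  qed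
qed

definition reached :: "'a set \<Rightarrow> 'b set" where
  "reached S = {a \<in> selected. \<exists>x\<in>S. \<exists>q. arc_walk G selected x q (tail G a)}"

lemma reached_arcs: "reached S \<subseteq> arcs G"
  using selected_arcs by (auto simp: reached_def)

lemma reached_walk:
  "arc_walk G selected u p w \<Longrightarrow> x \<in> S \<Longrightarrow> arc_walk G selected x q u \<Longrightarrow>
     arc_walk G (reached S) u p w"
proof (induction p arbitrary: u q)
  case Nil
  then show ?case using arc_walk_last_in_verts[OF selected_arcs] by auto
next
  case (Cons a p)
  have a: "a \<in> selected" "tail G a = u" "arc_walk G selected (head G a) p w"
    using Cons.prems selected_arcs by (auto simp: arc_walk_Cons)
  then have "arc_walk G selected u [a] (head G a)"
    using selected_arcs by (auto simp: arc_walk_Cons)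
  then have "arc_walk G selected x (q @ [a]) (head G a)"
    using arc_walk_append[OF selected_arcs Cons.prems(3)] by blast
  then have "arc_walk G (reached S) (head G a) p w" using Cons.IH a(3) Cons.prems(2) by blast
  moreover have "a \<in> reached S" using a Cons.prems unfolding reached_def by blast
  ultimately show ?case using a(2) by (simp add: arc_walk_Cons[OF reached_arcs])
qed

lemma reached_walk_from:
  assumes "arc_walk G selected x p w" "x \<in> S" shows "arc_walk G (reached S) x p w"
proof -
  have "arc_walk G selected x [] x" using assms(1) by (simp add: arc_walk_def)
  then show ?thesis using reached_walk[OF assms] by blast
qed

lemma reached_walk_unique:
  assumes "j \<in> {1,2}" "arc_walk G (reached S) v p (t j)" "arc_walk G (reached S) v q (t j)"
  shows "p = q"
proof -
  have sub: "reached S \<subseteq> selected" by (auto simp: reached_def)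
  show ?thesis
    using selected_walk_unique[OF assms(1) arc_walk_mono[OF assms(2) sub] arc_walk_mono[OF assms(3) sub]] .
qed

lemma reached_arc_on_walk:
  assumes e: "e \<in> reached S"
  obtains x j p where "x \<in> S" "j \<in> {1,2}" "arc_walk G (reached S) x p (t j)" "e \<in> set p"
proof -
  obtain x q where x: "x \<in> S" and q: "arc_walk G selected x q (tail G e)"
    using e by (auto simp: reached_def)
  have e_sel: "e \<in> selected" using e by (simp add: reached_def)
  then obtain j where j: "j \<in> targets (head G e)" using selected_productive by blast
  then obtain r where "arc_walk G selected (head G e) r (t j)" using selected_walk_exists by blast
  then have "arc_walk G selected (tail G e) (e # r) (t j)"
    using e_sel selected_arcs by (simp add: arc_walk_Cons)
  then have "arc_walk G selected x (q @ e # r) (t j)"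
    using arc_walk_append[OF selected_arcs q] by blast
  then have "arc_walk G (reached S) x (q @ e # r) (t j)"
    using reached_walk_from x by blast
  moreover have "j \<in> {1,2}" using j by (simp add: targets_def)
  ultimately show thesis using that x by auto
qed

theorem unique_minimal_subgraph:
  assumes S: "\<And>x j. x \<in> S \<Longrightarrow> j \<in> {1,2} \<Longrightarrow> x \<rightarrow>\<^sup>*\<^bsub>G\<^esub> t j"
  shows "\<exists>H. subgraph H G
           \<and> (\<forall>x\<in>S. \<forall>j\<in>{1,2}. \<exists>!p. pre_digraph.apath H x p (t j))
           \<and> (\<forall>e\<in>arcs H. \<exists>x\<in>S. \<exists>j\<in>{1,2}. \<not> (\<exists>p. pre_digraph.apath (pre_digraph.del_arc H e) x p (t j)))"
proof -
  let ?H = "restrict_arcs G (reached S)"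
  have sub: "subgraph ?H G" using subgraph_restrict_arcs[OF reached_arcs] .
  have unique: "\<exists>!p. pre_digraph.apath ?H x p (t j)" if x: "x \<in> S" and j: "j \<in> {1,2}" for x j
  proof -
    have "j \<in> targets x" using S x j by (simp add: targets_def)
    then obtain p where "arc_walk G selected x p (t j)" using selected_walk_exists by blast
    then have walk: "arc_walk G (reached S) x p (t j)" using reached_walk_from x by blast
    show ?thesis
      by (rule ex1_apath_restrict_arcs[OF reached_arcs walk]) (rule reached_walk_unique[OF j _ walk])
  qed
  have minimal: "\<exists>x\<in>S. \<exists>j\<in>{1,2}.
      \<not> (\<exists>p. pre_digraph.apath (pre_digraph.del_arc ?H e) x p (t j))" if "e \<in> arcs ?H" for e
  proof -
    have "e \<in> reached S" using that by (simp add: restrict_arcs_def)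
    then obtain x j p where x: "x \<in> S" and j: "j \<in> {1,2}"
      and walk: "arc_walk G (reached S) x p (t j)" and e: "e \<in> set p"
      by (rule reached_arc_on_walk)
    have "\<not> (\<exists>p. pre_digraph.apath (pre_digraph.del_arc ?H e) x p (t j))"
      by (rule no_apath_del_arc[OF walk e]) (rule reached_walk_unique[OF j _ walk])
    then show ?thesis using x j by blast
  qed
  show ?thesis by (intro exI[of _ ?H] conjI ballI sub unique minimal) assumption+
qed

end

theorem lemma2:
  fixes G :: "('a, 'b) pre_digraph"
    and n :: nat
    and s :: "nat \<Rightarrow> 'a"
    and t :: "nat \<Rightarrow> 'a"
  assumes fin: "fin_digraph G"
    and acyclic: "\<forall>p. \<not> pre_digraph.cycle G p"
    and s_verts: "\<forall>i\<in>{1..n}. s i \<in> verts G"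
    and t_verts: "\<forall>j\<in>{1..2}. t j \<in> verts G"
    and s_inj: "inj_on s {1..n}"
    and t_distinct: "t 1 \<noteq> t 2"
    and s_t_distinct: "\<forall>i\<in>{1..n}. \<forall>j\<in>{1..2}. s i \<noteq> t j"
    and s_sources: "\<forall>i\<in>{1..n}. in_arcs G (s i) = {}"
    and t_terminals: "\<forall>j\<in>{1..2}. out_arcs G (t j) = {}"
    and reach: "\<forall>i\<in>{1..n}. \<forall>j\<in>{1..2}. \<exists>p. pre_digraph.apath G (s i) p (t j)"
  shows "\<exists>H. subgraph H G
           \<and> (\<forall>i\<in>{1..n}. \<forall>j\<in>{1..2}. \<exists>!p. pre_digraph.apath H (s i) p (t j))
           \<and> (\<forall>e\<in>arcs H. \<exists>i\<in>{1..n}. \<exists>j\<in>{1..2}.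
                 \<not> (\<exists>p. pre_digraph.apath (pre_digraph.del_arc H e) (s i) p (t j)))"
proof -
  have two: "{1..2::nat} = {1,2}" by auto
  interpret two_terminal_dag G t
    using fin acyclic t_terminals by (simp add: two_terminal_dag_def two_terminal_dag_axioms_def two)
  have S: "x \<rightarrow>\<^sup>*\<^bsub>G\<^esub> t j" if "x \<in> s ` {1..n}" "j \<in> {1,2}" for x j
  proof -
    from that obtain i where i: "i \<in> {1..n}" and x: "x = s i" by blast
    have "\<exists>p. apath x p (t j)" using reach i x that(2) two by blast
    then obtain p where "apath x p (t j)" ..
    then show ?thesis by (auto simp: apath_def intro: reachable_awalkI)
  qed
  obtain H where "subgraph H G"
    and "\<forall>x\<in>s ` {1..n}. \<forall>j\<in>{1,2}. \<exists>!p. pre_digraph.apath H x p (t j)"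
    and "\<forall>e\<in>arcs H. \<exists>x\<in>s ` {1..n}. \<exists>j\<in>{1,2}.
           \<not> (\<exists>p. pre_digraph.apath (pre_digraph.del_arc H e) x p (t j))"
    using unique_minimal_subgraph[of "s ` {1..n}", OF S] by blast
  then show ?thesis unfolding two by blast
qed

end
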